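(* Let $R>1$ and let $f,g:\mathbb{D}_{R}\to\mathbb{C}$ be analytic in $\mathbb{D}_{R}=\{z\in\mathbb{C}:|z|<R\}$, $f(z)=\sum_{k=0}^{\infty}a_{k}z^{k}$, $g(z)=\sum_{k=0}^{\infty}b_{k}z^{k}$ for $z\in\mathbb{D}_{R}$. Let $1\le r<R$. Then $\sum_{m=0}^{\infty}m^{2}\big[\sum_{j=0}^{m}|a_{j}||b_{m-j}|\big]r^{m-1}<+\infty$ and for all $n\in\mathbb{N}$, $$\|B_{n}(fg)-B_{n}(f)B_{n}(g)\|_{r}\le\frac{6(1+r)}{n}\sum_{m=0}^{\infty}m^{2}\Big[\sum_{j=0}^{m}|a_{j}||b_{m-j}|\Big]r^{m-1}.$$
   Context: For a function $h$ defined on $[0,1]$ (here the restriction of an analytic function), the complex Bernstein polynomials are $B_{n}(h)(z)=\sum_{k=0}^{n}\binom{n}{k}z^{k}(1-z)^{n-k}h(k/n)$, $z\in\mathbb{C}$. For $h$ continuous on $\{|z|\le r\}$, $\|h\|_{r}=\max\{|h(z)|:|z|\le r\}$. *)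

theory Defs
  imports "HOL-Analysis.Analysis"
begin

definition bernstein :: "nat \<Rightarrow> (complex \<Rightarrow> complex) \<Rightarrow> complex \<Rightarrow> complex" where
  "bernstein n h z = (\<Sum>k=0..n. of_nat (n choose k) * z ^ k * (1 - z) ^ (n - k)
                          * h (complex_of_real (real k / real n)))"

definition disc_norm :: "real \<Rightarrow> (complex \<Rightarrow> complex) \<Rightarrow> real" where
  "disc_norm r h = (SUP z\<in>cball 0 r. norm (h z))"

end

theory Submission
  imports Defs "HOL-Combinatorics.Stirling" "HOL-Real_Asymp.Real_Asymp"
begin

text \<open>Expanding f and g in power series, linearity of the Bernstein operator gives
  B_n(fg) - B_n(f) B_n(g) = \<Sum>_m \<Sum>_{i\<le>m} a_i b_{m-i} (B_n(z^m) - B_n(z^i) B_n(z^{m-i})).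
  Expanding k^p in falling factorials shows that B_n(z^p) is a convex combination of 1, z, ..., z^p
  in which z^p carries the weight n(n-1)...(n-p+1)/n^p \<ge> 1 - p(p-1)/(2n). Hence for |z| \<le> r, r \<ge> 1,
  |B_n(z^p)| \<le> r^p and |B_n(z^p) - z^p| \<le> p(p-1) r^p / n, so each bracket is at most 3 m^2 r^m / n,
  and summing yields the estimate with the constant 3r \<le> 6(1+r).\<close>

definition ffact :: "nat \<Rightarrow> nat \<Rightarrow> nat" where
  "ffact x j = (\<Prod>i<j. x - i)"

lemma ffact_0 [simp]: "ffact x 0 = 1"
  by (simp add: ffact_def)

lemma ffact_Suc: "ffact x (Suc j) = ffact x j * (x - j)"
  by (simp add: ffact_def)

lemma ffact_Suc_Suc: "ffact (Suc x) (Suc j) = Suc x * ffact x j"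
  by (simp add: ffact_def prod.lessThan_Suc_shift del: prod.lessThan_Suc)

lemma ffact_eq_0: "x < j \<Longrightarrow> ffact x j = 0"
  unfolding ffact_def by (rule prod_zero) auto

lemma ffact_le_power: "ffact x j \<le> x ^ j"
proof -
  have "ffact x j \<le> (\<Prod>i<j. x)"
    unfolding ffact_def by (rule prod_mono) auto
  then show ?thesis by simp
qed

lemma mult_ffact: "x * ffact x j = ffact x (Suc j) + j * ffact x j"
proof (cases "j \<le> x")
  case True
  then show ?thesis by (simp add: ffact_Suc algebra_simps flip: add_mult_distrib2)
next
  case False
  then show ?thesis by (simp add: ffact_eq_0)
qed

lemma power_eq_sum_Stirling_ffact: "x ^ p = (\<Sum>j\<le>p. Stirling p j * ffact x j)"
proof (induction p)
  case 0
  then show ?case by simp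
next
  case (Suc p)
  have "x ^ Suc p = (\<Sum>j\<le>p. Stirling p j * (x * ffact x j))"
    by (simp add: Suc sum_distrib_left algebra_simps)
  also have "\<dots> = (\<Sum>j\<le>p. Stirling p j * ffact x (Suc j)) + (\<Sum>j\<le>p. j * Stirling p j * ffact x j)"
    by (simp add: mult_ffact algebra_simps sum.distrib)
  also have "(\<Sum>j\<le>p. j * Stirling p j * ffact x j) = (\<Sum>j\<le>p. Suc j * Stirling p (Suc j) * ffact x (Suc j))"
  proof -
    have "(\<Sum>j\<le>Suc p. j * Stirling p j * ffact x j) = (\<Sum>j\<le>p. Suc j * Stirling p (Suc j) * ffact x (Suc j))"
      by (subst sum.atMost_Suc_shift) simp
    then show ?thesis by simp
  qed
  also have "(\<Sum>j\<le>p. Stirling p j * ffact x (Suc j)) + \<dots> = (\<Sum>j\<le>p. Stirling (Suc p) (Suc j) * ffact x (Suc j))"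
    by (simp add: sum.distrib[symmetric] algebra_simps)
  also have "\<dots> = (\<Sum>j\<le>Suc p. Stirling (Suc p) j * ffact x j)"
    by (subst sum.atMost_Suc_shift) simp
  finally show ?case .
qed

lemma power_sub_ffact_le: "2 * real n * (real n ^ p - ffact n p) \<le> real p * (real p - 1) * real n ^ p"
proof (induction p)
  case 0
  then show ?case by simp
next
  case (Suc p)
  define F N where "F = real (ffact n p)" and "N = real n"
  have F: "0 \<le> F" "F \<le> N ^ p"
    unfolding F_def N_def using ffact_le_power[of n p] by (simp_all flip: of_nat_power)
  have N: "0 \<le> N" unfolding N_def by simp
  have step: "F * (N - real p) \<le> real (ffact n (Suc p))"
    unfolding F_def N_def by (cases "p \<le> n") (simp_all add: ffact_Suc of_nat_diff ffact_eq_0)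
  have "2 * N * (N ^ Suc p - ffact n (Suc p)) \<le> 2 * N * (N * N ^ p - F * (N - real p))"
    using step N by (intro mult_left_mono) auto
  also have "\<dots> = N * (2 * N * (N ^ p - F)) + 2 * N * real p * F"
    by (simp add: algebra_simps)
  also have "\<dots> \<le> N * (real p * (real p - 1) * N ^ p) + 2 * N * real p * N ^ p"
    using Suc.IH F N unfolding F_def N_def by (intro add_mono mult_left_mono) auto
  also have "\<dots> = real (Suc p) * (real (Suc p) - 1) * N ^ Suc p"
    by (simp add: algebra_simps)
  finally show ?case unfolding N_def .
qed

lemma sum_binomial_ffact:
  fixes z :: "'a::comm_ring_1"
  shows "(\<Sum>k\<le>n. of_nat (n choose k) * of_nat (ffact k j) * z ^ k * (1 - z) ^ (n - k))
    = of_nat (ffact n j) * z ^ j"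
proof (induction j arbitrary: n)
  case 0
  show ?case using binomial_ring[of z "1 - z" n] by simp
next
  case (Suc j)
  show ?case
  proof (cases n)
    case 0
    then show ?thesis by (simp add: ffact_eq_0)
  next
    case (Suc m)
    have coeff: "(Suc m choose Suc i) * ffact (Suc i) (Suc j) = Suc m * ((m choose i) * ffact i j)" for i
    proof -
      have "(Suc m choose Suc i) * ffact (Suc i) (Suc j) = (Suc i * (Suc m choose Suc i)) * ffact i j"
        by (simp only: ffact_Suc_Suc ac_simps)
      then show ?thesis by (simp only: Suc_times_binomial mult.assoc)
    qed
    have "(\<Sum>k\<le>Suc m. of_nat (Suc m choose k) * of_nat (ffact k (Suc j)) * z ^ k * (1 - z) ^ (Suc m - k))
        = (\<Sum>i\<le>m. of_nat (Suc m choose Suc i) * of_nat (ffact (Suc i) (Suc j)) * z ^ Suc i * (1 - z) ^ (m - i))"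
      by (subst sum.atMost_Suc_shift) (simp add: ffact_eq_0)
    also have "\<dots> = of_nat (Suc m) * z
        * (\<Sum>i\<le>m. of_nat (m choose i) * of_nat (ffact i j) * z ^ i * (1 - z) ^ (m - i))"
      unfolding sum_distrib_left
    proof (rule sum.cong[OF refl])
      fix i
      have "(of_nat (Suc m choose Suc i) * of_nat (ffact (Suc i) (Suc j)) :: 'a)
          = of_nat (Suc m) * (of_nat (m choose i) * of_nat (ffact i j))"
        by (simp only: coeff flip: of_nat_mult)
      then show "of_nat (Suc m choose Suc i) * of_nat (ffact (Suc i) (Suc j)) * z ^ Suc i * (1 - z) ^ (m - i)
          = of_nat (Suc m) * z * (of_nat (m choose i) * of_nat (ffact i j) * z ^ i * (1 - z) ^ (m - i))"
        by (simp only: power_Suc ac_simps)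
    qed
    also have "\<dots> = of_nat (ffact (Suc m) (Suc j)) * z ^ Suc j"
      by (simp only: Suc.IH) (simp add: ffact_Suc_Suc algebra_simps)
    finally show ?thesis using Suc by simp
  qed
qed

lemma bernstein_power:
  assumes "n \<ge> 1"
  shows "bernstein n (\<lambda>w. w ^ p) z = (\<Sum>j\<le>p. (real (Stirling p j * ffact n j) / real n ^ p) *\<^sub>R z ^ j)"
proof -
  have "bernstein n (\<lambda>w. w ^ p) z
      = (\<Sum>k\<le>n. of_nat (n choose k) * z ^ k * (1 - z) ^ (n - k) * of_nat (k ^ p)) / of_nat n ^ p"
    unfolding bernstein_def atLeast0AtMost
    by (simp add: sum_divide_distrib power_divide)
  also have "(\<Sum>k\<le>n. of_nat (n choose k) * z ^ k * (1 - z) ^ (n - k) * of_nat (k ^ p))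
      = (\<Sum>j\<le>p. of_nat (Stirling p j)
           * (\<Sum>k\<le>n. of_nat (n choose k) * of_nat (ffact k j) * z ^ k * (1 - z) ^ (n - k)))"
    unfolding power_eq_sum_Stirling_ffact[of _ p]
    by (simp add: sum_distrib_left sum_distrib_right algebra_simps sum.swap[of _ "{..n}"])
  also have "\<dots> = (\<Sum>j\<le>p. of_nat (Stirling p j * ffact n j) * z ^ j)"
    by (simp only: sum_binomial_ffact) (simp add: mult.assoc)
  finally show ?thesis
    using assms by (simp add: sum_divide_distrib scaleR_conv_of_real)
qed

lemma sum_bernstein_power_weights:
  assumes "n \<ge> 1"
  shows "(\<Sum>j\<le>p. real (Stirling p j * ffact n j) / real n ^ p) = 1"
proof -
  have "real n ^ p = real (\<Sum>j\<le>p. Stirling p j * ffact n j)"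
    by (simp flip: power_eq_sum_Stirling_ffact)
  then have "(\<Sum>j\<le>p. real (Stirling p j * ffact n j)) = real n ^ p"
    by simp
  then show ?thesis
    using assms by (simp flip: sum_divide_distrib)
qed

lemma norm_power_le_power:
  fixes z :: "'a::real_normed_algebra_1"
  assumes "norm z \<le> r" "1 \<le> r" "j \<le> p"
  shows "norm (z ^ j) \<le> r ^ p"
proof -
  have "norm (z ^ j) \<le> norm z ^ j" by (rule norm_power_ineq)
  also have "\<dots> \<le> r ^ j" using assms by (intro power_mono) auto
  also have "\<dots> \<le> r ^ p" using assms by (intro power_increasing) auto
  finally show ?thesis .
qed

lemma
  fixes z :: "'a::real_normed_algebra_1" and w :: "nat \<Rightarrow> real"
  assumes w: "\<And>j. 0 \<le> w j" "(\<Sum>j\<le>p. w j) = 1" and z: "norm z \<le> r" "1 \<le> r"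
  shows norm_convex_powers_le: "norm (\<Sum>j\<le>p. w j *\<^sub>R z ^ j) \<le> r ^ p"
    and norm_convex_powers_sub_le: "norm ((\<Sum>j\<le>p. w j *\<^sub>R z ^ j) - z ^ p) \<le> 2 * (1 - w p) * r ^ p"
proof -
  have "norm (\<Sum>j\<le>p. w j *\<^sub>R z ^ j) \<le> (\<Sum>j\<le>p. w j * r ^ p)"
    using w norm_power_le_power[OF z]
    by (intro order_trans[OF norm_sum] sum_mono) (simp add: mult_left_mono)
  then show "norm (\<Sum>j\<le>p. w j *\<^sub>R z ^ j) \<le> r ^ p"
    by (simp add: w flip: sum_distrib_right)
  have "(\<Sum>j\<le>p. w j *\<^sub>R z ^ j) - z ^ p = (\<Sum>j\<le>p. w j *\<^sub>R (z ^ j - z ^ p))"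
    by (simp add: scaleR_diff_right sum_subtractf w flip: scaleR_sum_left)
  also have "\<dots> = (\<Sum>j<p. w j *\<^sub>R (z ^ j - z ^ p))"
    by (simp add: lessThan_Suc_atMost[symmetric])
  finally have eq: "(\<Sum>j\<le>p. w j *\<^sub>R z ^ j) - z ^ p = (\<Sum>j<p. w j *\<^sub>R (z ^ j - z ^ p))" .
  have "norm ((\<Sum>j\<le>p. w j *\<^sub>R z ^ j) - z ^ p) \<le> (\<Sum>j<p. w j * (2 * r ^ p))"
    unfolding eq
  proof (intro order_trans[OF norm_sum] sum_mono)
    fix j assume "j \<in> {..<p}"
    then have "norm (z ^ j - z ^ p) \<le> 2 * r ^ p"
      using norm_triangle_ineq4[of "z ^ j" "z ^ p"] norm_power_le_power[OF z, of j p] norm_power_le_power[OF z, of p p]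
      by simp
    then show "norm (w j *\<^sub>R (z ^ j - z ^ p)) \<le> w j * (2 * r ^ p)"
      using w by (simp add: mult_left_mono)
  qed
  moreover have "(\<Sum>j<p. w j * (2 * r ^ p)) = 2 * (1 - w p) * r ^ p"
    using w by (simp add: lessThan_Suc_atMost[symmetric] flip: sum_distrib_right)
  ultimately show "norm ((\<Sum>j\<le>p. w j *\<^sub>R z ^ j) - z ^ p) \<le> 2 * (1 - w p) * r ^ p"
    by linarith
qed

lemma norm_bernstein_power_le:
  assumes "n \<ge> 1" "norm z \<le> r" "1 \<le> r"
  shows "norm (bernstein n (\<lambda>w. w ^ p) z) \<le> r ^ p"
  unfolding bernstein_power[OF assms(1)]
  using assms by (intro norm_convex_powers_le sum_bernstein_power_weights) auto

lemma norm_bernstein_power_sub_le: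
  assumes n: "n \<ge> 1" and z: "norm z \<le> r" "1 \<le> r"
  shows "norm (bernstein n (\<lambda>w. w ^ p) z - z ^ p) \<le> real p * (real p - 1) / real n * r ^ p"
proof -
  define w where "w j = real (Stirling p j * ffact n j) / real n ^ p" for j
  have "(\<Sum>j\<le>p. w j) = 1"
    unfolding w_def by (rule sum_bernstein_power_weights[OF n])
  then have "norm (bernstein n (\<lambda>w. w ^ p) z - z ^ p) \<le> 2 * (1 - w p) * r ^ p"
    unfolding bernstein_power[OF n] w_def[symmetric]
    using z by (intro norm_convex_powers_sub_le) (auto simp: w_def)
  also have "2 * (1 - w p) = 2 * real n * (real n ^ p - ffact n p) / (real n * real n ^ p)"
    using n by (simp add: w_def field_simps)
  also have "\<dots> \<le> real p * (real p - 1) * real n ^ p / (real n * real n ^ p)"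
    using n by (intro divide_right_mono power_sub_ffact_le) auto
  also have "\<dots> = real p * (real p - 1) / real n"
    using n by simp
  finally show ?thesis
    using z by (simp add: mult_right_mono)
qed

lemma norm_bernstein_power_mult_sub_le:
  assumes n: "n \<ge> 1" and z: "norm z \<le> r" "1 \<le> r" and "j \<le> m"
  shows "norm (bernstein n (\<lambda>w. w ^ m) z - bernstein n (\<lambda>w. w ^ j) z * bernstein n (\<lambda>w. w ^ (m - j)) z)
    \<le> 3 * real m ^ 2 * r ^ m / real n"
proof -
  define l where "l = m - j"
  have m: "m = j + l" using \<open>j \<le> m\<close> unfolding l_def by simp
  define P where "P p = bernstein n (\<lambda>w. w ^ p) z" for p
  define E where "E p = P p - z ^ p" for p
  have E: "norm (E p) \<le> real p ^ 2 / real n * r ^ p" for p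
  proof -
    have "norm (E p) \<le> real p * (real p - 1) / real n * r ^ p"
      unfolding E_def P_def by (rule norm_bernstein_power_sub_le[OF n z])
    also have "\<dots> \<le> real p ^ 2 / real n * r ^ p"
      using z by (intro mult_right_mono divide_right_mono) (auto simp: power2_eq_square algebra_simps)
    finally show ?thesis .
  qed
  have P: "norm (P p) \<le> r ^ p" for p
    unfolding P_def by (rule norm_bernstein_power_le[OF n z])
  have zp: "norm (z ^ p) \<le> r ^ p" for p
    by (rule norm_power_le_power[OF z order_refl])
  have "P m - P j * P l = E m - E j * P l - z ^ j * E l"
    unfolding E_def m by (simp add: power_add algebra_simps)
  then have "norm (P m - P j * P l) \<le> norm (E m) + norm (E j * P l) + norm (z ^ j * E l)"
    by (metis order_trans[OF norm_triangle_ineq4 add_right_mono[OF norm_triangle_ineq4]])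
  also have "\<dots> = norm (E m) + norm (E j) * norm (P l) + norm (z ^ j) * norm (E l)"
    by (simp only: norm_mult)
  also have "\<dots> \<le> real m ^ 2 / real n * r ^ m + real j ^ 2 / real n * r ^ j * r ^ l + r ^ j * (real l ^ 2 / real n * r ^ l)"
    using z by (intro add_mono mult_mono E P zp) auto
  also have "\<dots> = (real m ^ 2 + real j ^ 2 + real l ^ 2) * r ^ m / real n"
    unfolding m by (simp add: power_add algebra_simps add_divide_distrib)
  also have "\<dots> \<le> 3 * real m ^ 2 * r ^ m / real n"
  proof -
    have "real j ^ 2 \<le> real m ^ 2" "real l ^ 2 \<le> real m ^ 2"
      using m by (simp_all add: power_mono)
    then have sum_sq: "real m ^ 2 + real j ^ 2 + real l ^ 2 \<le> 3 * real m ^ 2"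
      by linarith
    show ?thesis
      using z by (intro divide_right_mono mult_right_mono[OF sum_sq]) auto
  qed
  finally show ?thesis unfolding P_def l_def .
qed

lemma bernstein_powser_sums:
  assumes "\<And>x. x \<in> {0..1} \<Longrightarrow> (\<lambda>k. e k * complex_of_real x ^ k) sums F (complex_of_real x)"
  shows "(\<lambda>p. e p * bernstein n (\<lambda>w. w ^ p) z) sums bernstein n F z"
proof -
  define c where "c k = of_nat (n choose k) * z ^ k * (1 - z) ^ (n - k)" for k
  define x where "x k = complex_of_real (real k / real n)" for k
  have "(\<lambda>p. \<Sum>k\<in>{0..n}. c k * (e p * x k ^ p)) sums (\<Sum>k\<in>{0..n}. c k * F (x k))"
    unfolding x_def by (intro sums_sum sums_mult assms) (auto simp: divide_le_eq_1)
  then show ?thesis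
    unfolding bernstein_def c_def x_def by (simp add: sum_distrib_left algebra_simps)
qed

lemma summable_norm_powser_inside:
  fixes e :: "nat \<Rightarrow> 'a::{real_normed_div_algebra,banach}"
  assumes "\<And>z. z \<in> ball 0 R \<Longrightarrow> summable (\<lambda>k. e k * z ^ k)" and "x \<in> ball 0 R"
  shows "summable (\<lambda>k. norm (e k * x ^ k))"
proof -
  have "norm x < R"
    using assms(2) by simp
  then obtain \<rho> where \<rho>: "norm x < \<rho>" "\<rho> < R"
    using dense by blast
  moreover have "0 < \<rho>"
    using \<rho> norm_ge_zero[of x] by linarith
  ultimately have "norm x < norm (of_real \<rho> :: 'a)" "of_real \<rho> \<in> ball (0::'a) R"
    by auto
  then show ?thesis
    by (intro powser_insidea[of _ "of_real \<rho>"] assms(1))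
qed

lemma powser_Cauchy_product_sums:
  fixes a b :: "nat \<Rightarrow> 'a::{real_normed_field,banach}"
  assumes "summable (\<lambda>k. norm (a k * z ^ k))" "summable (\<lambda>k. norm (b k * z ^ k))"
  shows "(\<lambda>m. (\<Sum>i\<le>m. a i * b (m - i)) * z ^ m) sums ((\<Sum>k. a k * z ^ k) * (\<Sum>k. b k * z ^ k))"
proof -
  have "a i * z ^ i * (b (m - i) * z ^ (m - i)) = a i * b (m - i) * z ^ m" if "i \<le> m" for i m
  proof -
    have "z ^ i * z ^ (m - i) = z ^ m"
      using that by (simp flip: power_add)
    then show ?thesis by (metis mult.assoc mult.left_commute)
  qed
  then have "(\<Sum>i\<le>m. a i * z ^ i * (b (m - i) * z ^ (m - i))) = (\<Sum>i\<le>m. a i * b (m - i)) * z ^ m" for m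
    unfolding sum_distrib_right by (intro sum.cong) auto
  then show ?thesis
    using Cauchy_product_sums[OF assms] by simp
qed

lemma summable_power2_mult_powser:
  fixes c :: "nat \<Rightarrow> real"
  assumes "summable (\<lambda>m. c m * s ^ m)" "\<And>m. 0 \<le> c m" "0 < r" "r < s"
  shows "summable (\<lambda>m. real m ^ 2 * c m * r ^ m)"
proof -
  define q where "q = r / s"
  have "0 < q" "q < 1" unfolding q_def using assms by simp_all
  then have "(\<lambda>m. real m ^ 2 * q ^ m) \<longlonglongrightarrow> 0" by real_asymp
  then have "Bseq (\<lambda>m. real m ^ 2 * q ^ m)"
    by (intro convergent_imp_Bseq convergentI)
  then obtain K where K: "\<And>m. norm (real m ^ 2 * q ^ m) \<le> K"
    using BseqD by blast
  show ?thesis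
  proof (rule summable_comparison_test'[where N = 0])
    show "summable (\<lambda>m. K * (c m * s ^ m))"
      by (rule summable_mult[OF assms(1)])
    fix m
    have "real m ^ 2 * c m * r ^ m = (real m ^ 2 * q ^ m) * (c m * s ^ m)"
      unfolding q_def using assms by (simp add: power_divide)
    also have "\<dots> \<le> K * (c m * s ^ m)"
      using K[of m] assms by (intro mult_right_mono) auto
    finally show "norm (real m ^ 2 * c m * r ^ m) \<le> K * (c m * s ^ m)"
      using assms by simp
  qed
qed

lemma summable_power2_norm_convolution:
  fixes a b :: "nat \<Rightarrow> complex"
  assumes "\<And>z. z \<in> ball 0 R \<Longrightarrow> summable (\<lambda>k. a k * z ^ k)"
    and "\<And>z. z \<in> ball 0 R \<Longrightarrow> summable (\<lambda>k. b k * z ^ k)"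
    and "0 < r" "r < R"
  shows "summable (\<lambda>m. real m ^ 2 * (\<Sum>j=0..m. norm (a j) * norm (b (m - j))) * r ^ (m - 1))"
proof -
  obtain s where s: "r < s" "s < R"
    using dense assms(4) by blast
  then have s_ball: "of_real s \<in> ball (0::complex) R"
    using assms by simp
  have "0 < s" using s assms by simp
  then have na: "summable (\<lambda>k. norm (norm (a k) * s ^ k))"
    and nb: "summable (\<lambda>k. norm (norm (b k) * s ^ k))"
    using summable_norm_powser_inside[OF assms(1) s_ball] summable_norm_powser_inside[OF assms(2) s_ball]
    by (simp_all add: norm_mult norm_power)
  have "summable (\<lambda>m. (\<Sum>j\<le>m. norm (a j) * norm (b (m - j))) * s ^ m)"
    using powser_Cauchy_product_sums[OF na nb] by (rule sums_summable)
  then have "summable (\<lambda>m. real m ^ 2 * (\<Sum>j\<le>m. norm (a j) * norm (b (m - j))) * r ^ m)"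
    using s assms by (intro summable_power2_mult_powser) (auto intro: sum_nonneg)
  then have "summable (\<lambda>m. real m ^ 2 * (\<Sum>j\<le>m. norm (a j) * norm (b (m - j))) * r ^ m / r)"
    by (rule summable_divide)
  moreover have "real m ^ 2 * t * r ^ m / r = real m ^ 2 * t * r ^ (m - 1)" for m and t :: real
    using assms by (cases m) auto
  ultimately show ?thesis by (simp add: atLeast0AtMost)
qed

lemma bernstein_mult_sub_sums:
  fixes a b :: "nat \<Rightarrow> complex"
  assumes a: "\<And>z. z \<in> ball 0 R \<Longrightarrow> (\<lambda>k. a k * z ^ k) sums f z"
    and b: "\<And>z. z \<in> ball 0 R \<Longrightarrow> (\<lambda>k. b k * z ^ k) sums g z"
    and n: "n \<ge> 1" and z: "norm z \<le> r" "1 \<le> r" and "r < R"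
  shows "(\<lambda>m. \<Sum>i\<le>m. a i * b (m - i) * (bernstein n (\<lambda>w. w ^ m) z
            - bernstein n (\<lambda>w. w ^ i) z * bernstein n (\<lambda>w. w ^ (m - i)) z))
    sums (bernstein n (\<lambda>w. f w * g w) z - bernstein n f z * bernstein n g z)"
proof -
  define P where "P p = bernstein n (\<lambda>w. w ^ p) z" for p
  have r_ball: "of_real r \<in> ball (0::complex) R" and unit_ball: "\<And>x. x \<in> {0..1} \<Longrightarrow> of_real x \<in> ball (0::complex) R"
    using z \<open>r < R\<close> by auto
  have sa: "\<And>z. z \<in> ball 0 R \<Longrightarrow> summable (\<lambda>k. a k * z ^ k)"
    and sb: "\<And>z. z \<in> ball 0 R \<Longrightarrow> summable (\<lambda>k. b k * z ^ k)"
    using a b sums_summable by blast+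
  have Bf: "(\<lambda>p. a p * P p) sums bernstein n f z"
    unfolding P_def by (intro bernstein_powser_sums a unit_ball)
  have Bg: "(\<lambda>p. b p * P p) sums bernstein n g z"
    unfolding P_def by (intro bernstein_powser_sums b unit_ball)
  have fg: "(\<lambda>m. (\<Sum>i\<le>m. a i * b (m - i)) * x ^ m) sums (f x * g x)" if "x \<in> ball 0 R" for x
    using powser_Cauchy_product_sums[OF summable_norm_powser_inside[OF sa that] summable_norm_powser_inside[OF sb that]]
      a[OF that] b[OF that] by (simp add: sums_iff)
  have Bfg: "(\<lambda>m. (\<Sum>i\<le>m. a i * b (m - i)) * P m) sums bernstein n (\<lambda>w. f w * g w) z"
    unfolding P_def by (intro bernstein_powser_sums fg unit_ball)
  have "summable (\<lambda>p. norm (e p * P p))" if "\<And>z. z \<in> ball 0 R \<Longrightarrow> summable (\<lambda>k. e k * z ^ k)" for e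
  proof (rule summable_comparison_test'[where N = 0])
    show "summable (\<lambda>p. norm (e p * of_real r ^ p))"
      by (rule summable_norm_powser_inside[OF that r_ball])
    show "norm (norm (e p * P p)) \<le> norm (e p * of_real r ^ p)" for p
      using norm_bernstein_power_le[OF n z, of p] z
      by (simp add: P_def norm_mult norm_power mult_left_mono)
  qed
  then have BfBg: "(\<lambda>m. \<Sum>i\<le>m. a i * P i * (b (m - i) * P (m - i))) sums (bernstein n f z * bernstein n g z)"
    using Cauchy_product_sums[of "\<lambda>p. a p * P p" "\<lambda>p. b p * P p"] sa sb Bf Bg by (simp add: sums_iff)
  have eq: "(\<Sum>i\<le>m. a i * b (m - i) * (P m - P i * P (m - i)))
      = (\<Sum>i\<le>m. a i * b (m - i)) * P m - (\<Sum>i\<le>m. a i * P i * (b (m - i) * P (m - i)))" for m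
    unfolding sum_distrib_right sum_subtractf[symmetric] by (intro sum.cong) (simp_all add: algebra_simps)
  have "(\<lambda>m. \<Sum>i\<le>m. a i * b (m - i) * (P m - P i * P (m - i)))
      sums (bernstein n (\<lambda>w. f w * g w) z - bernstein n f z * bernstein n g z)"
    unfolding eq by (rule sums_diff[OF Bfg BfBg])
  then show ?thesis
    unfolding P_def .
qed

lemma norm_bernstein_mult_sub_le:
  fixes a b :: "nat \<Rightarrow> complex"
  assumes a: "\<And>z. z \<in> ball 0 R \<Longrightarrow> (\<lambda>k. a k * z ^ k) sums f z"
    and b: "\<And>z. z \<in> ball 0 R \<Longrightarrow> (\<lambda>k. b k * z ^ k) sums g z"
    and n: "n \<ge> 1" and z: "norm z \<le> r" "1 \<le> r" and "r < R"
  shows "norm (bernstein n (\<lambda>w. f w * g w) z - bernstein n f z * bernstein n g z)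
    \<le> 3 * r / real n * (\<Sum>m. real m ^ 2 * (\<Sum>j=0..m. norm (a j) * norm (b (m - j))) * r ^ (m - 1))"
proof -
  define T where "T m = (\<Sum>j=0..m. norm (a j) * norm (b (m - j)))" for m
  define u where "u m = real m ^ 2 * T m * r ^ (m - 1)" for m
  have su: "summable u"
    unfolding u_def T_def using a b z \<open>r < R\<close>
    by (intro summable_power2_norm_convolution) (auto intro: sums_summable)
  have bound: "norm (\<Sum>i\<le>m. a i * b (m - i) * (bernstein n (\<lambda>w. w ^ m) z
            - bernstein n (\<lambda>w. w ^ i) z * bernstein n (\<lambda>w. w ^ (m - i)) z)) \<le> 3 * r / real n * u m" for m
  proof -
    have "norm (\<Sum>i\<le>m. a i * b (m - i) * (bernstein n (\<lambda>w. w ^ m) z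
            - bernstein n (\<lambda>w. w ^ i) z * bernstein n (\<lambda>w. w ^ (m - i)) z))
        \<le> (\<Sum>i\<le>m. norm (a i) * norm (b (m - i)) * (3 * real m ^ 2 * r ^ m / real n))"
    proof (intro order_trans[OF norm_sum] sum_mono)
      fix i
      assume "i \<in> {..m}"
      then show "norm (a i * b (m - i) * (bernstein n (\<lambda>w. w ^ m) z
            - bernstein n (\<lambda>w. w ^ i) z * bernstein n (\<lambda>w. w ^ (m - i)) z))
          \<le> norm (a i) * norm (b (m - i)) * (3 * real m ^ 2 * r ^ m / real n)"
        unfolding norm_mult using norm_bernstein_power_mult_sub_le[OF n z, of i m]
        by (intro mult_left_mono) auto
    qed
    also have "\<dots> = T m * (3 * real m ^ 2 * r ^ m / real n)"
      unfolding T_def atLeast0AtMost by (rule sum_distrib_right[symmetric])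
    also have "\<dots> = 3 * r / real n * u m"
      unfolding u_def using z by (cases m) (auto simp: field_simps)
    finally show ?thesis .
  qed
  have "norm (bernstein n (\<lambda>w. f w * g w) z - bernstein n f z * bernstein n g z)
      = norm (\<Sum>m. \<Sum>i\<le>m. a i * b (m - i) * (bernstein n (\<lambda>w. w ^ m) z
            - bernstein n (\<lambda>w. w ^ i) z * bernstein n (\<lambda>w. w ^ (m - i)) z))"
    using bernstein_mult_sub_sums[OF a b n z \<open>r < R\<close>] by (simp add: sums_iff)
  also have "\<dots> \<le> (\<Sum>m. 3 * r / real n * u m)"
    by (rule norm_suminf_le[OF bound summable_mult[OF su]])
  also have "\<dots> = 3 * r / real n * (\<Sum>m. u m)"
    by (rule suminf_mult[OF su])
  finally show ?thesis
    unfolding u_def T_def .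
qed

theorem theorem4p1:
  fixes R r :: real and f g :: "complex \<Rightarrow> complex" and a b :: "nat \<Rightarrow> complex"
  assumes "R > 1"
    and "f analytic_on ball 0 R" and "g analytic_on ball 0 R"
    and "\<And>z. z \<in> ball 0 R \<Longrightarrow> (\<lambda>k. a k * z ^ k) sums f z"
    and "\<And>z. z \<in> ball 0 R \<Longrightarrow> (\<lambda>k. b k * z ^ k) sums g z"
    and "1 \<le> r" and "r < R"
  shows "summable (\<lambda>m. real m ^ 2 * (\<Sum>j=0..m. norm (a j) * norm (b (m - j))) * r ^ (m - 1))
    \<and> (\<forall>n::nat. n \<ge> 1 \<longrightarrow>
         disc_norm r (\<lambda>z. bernstein n (\<lambda>w. f w * g w) z - bernstein n f z * bernstein n g z)
         \<le> 6 * (1 + r) / real n *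
            (\<Sum>m. real m ^ 2 * (\<Sum>j=0..m. norm (a j) * norm (b (m - j))) * r ^ (m - 1)))"
proof -
  note a = assms(4) and b = assms(5) and r = assms(6,7)
  define S where "S = (\<Sum>m. real m ^ 2 * (\<Sum>j=0..m. norm (a j) * norm (b (m - j))) * r ^ (m - 1))"
  have summable: "summable (\<lambda>m. real m ^ 2 * (\<Sum>j=0..m. norm (a j) * norm (b (m - j))) * r ^ (m - 1))"
    using a b r by (intro summable_power2_norm_convolution) (auto intro: sums_summable)
  then have "0 \<le> S"
    unfolding S_def using r by (intro suminf_nonneg) (auto intro!: mult_nonneg_nonneg sum_nonneg)
  have "disc_norm r (\<lambda>z. bernstein n (\<lambda>w. f w * g w) z - bernstein n f z * bernstein n g z) \<le> 6 * (1 + r) / real n * S"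
    if n: "n \<ge> 1" for n
    unfolding disc_norm_def
  proof (rule cSUP_least)
    show "cball 0 r \<noteq> {}"
      using r by simp
    fix z :: complex
    assume "z \<in> cball 0 r"
    then have "norm (bernstein n (\<lambda>w. f w * g w) z - bernstein n f z * bernstein n g z) \<le> 3 * r / real n * S"
      unfolding S_def using r by (intro norm_bernstein_mult_sub_le[OF a b n]) auto
    also have "\<dots> \<le> 6 * (1 + r) / real n * S"
      using r \<open>0 \<le> S\<close> by (intro mult_right_mono divide_right_mono) auto
    finally show "norm (bernstein n (\<lambda>w. f w * g w) z - bernstein n f z * bernstein n g z) \<le> 6 * (1 + r) / real n * S" .
  qed
  with summable show ?thesis
    unfolding S_def by blast
qed

end
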